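(* Let $u,v\in P$ with $u<v$. Then the relations $<$ and ${\rm Low}$ are primitive positive definable in $(P;{\rm Betw},\bot,u,v)$.
   Context: $(P;\leq)$ is the random partial order (Fraïssé limit of all finite partial orders); $x<y$ means $x\leq y\wedge x\neq y$; $x\bot y$ means $x,y$ incomparable; $z\bot xy$ abbreviates $z\bot x\wedge z\bot y$. ${\rm Betw}(x,y,z):=(x<y\wedge y<z)\vee(z<y\wedge y<x)$; ${\rm Low}(x,y,z):=(x<y\wedge z\bot xy)\vee(x<z\wedge y\bot xz)$. $(P;{\rm Betw},\bot,u,v)$ is the structure with relations ${\rm Betw}$, $\bot$ and constants (singleton unary relations) $u,v$. Primitive positive definable: definable by $\exists\bar y$ (conjunction of atomic formulas). *)

theory Defs
  imports Main "HOL-Library.Countable_Set"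
begin

definition partial_order_on_type :: "('a \<Rightarrow> 'a \<Rightarrow> bool) \<Rightarrow> bool" where
  "partial_order_on_type le \<longleftrightarrow>
     (\<forall>x. le x x) \<and> (\<forall>x y. le x y \<and> le y x \<longrightarrow> x = y) \<and>
     (\<forall>x y z. le x y \<and> le y z \<longrightarrow> le x z)"

definition all_finite_pos_embed :: "('a \<Rightarrow> 'a \<Rightarrow> bool) \<Rightarrow> bool" where
  "all_finite_pos_embed le \<longleftrightarrow>
     (\<forall>(n::nat) (R::nat \<Rightarrow> nat \<Rightarrow> bool).
        ((\<forall>i<n. R i i) \<and> (\<forall>i<n. \<forall>j<n. R i j \<and> R j i \<longrightarrow> i = j) \<and>
         (\<forall>i<n. \<forall>j<n. \<forall>k<n. R i j \<and> R j k \<longrightarrow> R i k))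
        \<longrightarrow> (\<exists>f::nat \<Rightarrow> 'a. inj_on f {..<n} \<and>
               (\<forall>i<n. \<forall>j<n. R i j \<longleftrightarrow> le (f i) (f j))))"

definition homogeneous_po :: "('a \<Rightarrow> 'a \<Rightarrow> bool) \<Rightarrow> bool" where
  "homogeneous_po le \<longleftrightarrow>
     (\<forall>(A::'a set) (g::'a \<Rightarrow> 'a). finite A \<and> inj_on g A \<and>
        (\<forall>x\<in>A. \<forall>y\<in>A. le x y \<longleftrightarrow> le (g x) (g y))
        \<longrightarrow> (\<exists>h. bij h \<and> (\<forall>x y. le x y \<longleftrightarrow> le (h x) (h y)) \<and> (\<forall>x\<in>A. h x = g x)))"

text \<open>The random partial order: the Fraisse limit of the class of all finite partial orders,
  i.e. the countable homogeneous partial order into which every finite partial order embeds.\<close>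
definition random_po :: "('a \<Rightarrow> 'a \<Rightarrow> bool) \<Rightarrow> bool" where
  "random_po le \<longleftrightarrow> countable (UNIV :: 'a set) \<and> partial_order_on_type le \<and>
     all_finite_pos_embed le \<and> homogeneous_po le"

definition lt :: "('a \<Rightarrow> 'a \<Rightarrow> bool) \<Rightarrow> 'a \<Rightarrow> 'a \<Rightarrow> bool" where
  "lt le x y \<longleftrightarrow> le x y \<and> x \<noteq> y"

definition incomp :: "('a \<Rightarrow> 'a \<Rightarrow> bool) \<Rightarrow> 'a \<Rightarrow> 'a \<Rightarrow> bool" where
  "incomp le x y \<longleftrightarrow> \<not> le x y \<and> \<not> le y x"

definition Betw :: "('a \<Rightarrow> 'a \<Rightarrow> bool) \<Rightarrow> 'a \<Rightarrow> 'a \<Rightarrow> 'a \<Rightarrow> bool" where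
  "Betw le x y z \<longleftrightarrow> (lt le x y \<and> lt le y z) \<or> (lt le z y \<and> lt le y x)"

definition Low :: "('a \<Rightarrow> 'a \<Rightarrow> bool) \<Rightarrow> 'a \<Rightarrow> 'a \<Rightarrow> 'a \<Rightarrow> bool" where
  "Low le x y z \<longleftrightarrow>
     (lt le x y \<and> incomp le z x \<and> incomp le z y) \<or> (lt le x z \<and> incomp le y x \<and> incomp le y z)"

text \<open>Variables are natural numbers; constants u, v are singleton unary relations.\<close>
datatype ppf =
    PTrue
  | PEq nat nat
  | PBetw nat nat nat
  | PPerp nat nat
  | PU nat
  | PV nat
  | PAnd ppf ppf
  | PEx nat ppf

fun pp_holds :: "('a \<Rightarrow> 'a \<Rightarrow> bool) \<Rightarrow> 'a \<Rightarrow> 'a \<Rightarrow> (nat \<Rightarrow> 'a) \<Rightarrow> ppf \<Rightarrow> bool" where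
  "pp_holds le u v s PTrue = True"
| "pp_holds le u v s (PEq i j) = (s i = s j)"
| "pp_holds le u v s (PBetw i j k) = Betw le (s i) (s j) (s k)"
| "pp_holds le u v s (PPerp i j) = incomp le (s i) (s j)"
| "pp_holds le u v s (PU i) = (s i = u)"
| "pp_holds le u v s (PV i) = (s i = v)"
| "pp_holds le u v s (PAnd \<phi> \<psi>) = (pp_holds le u v s \<phi> \<and> pp_holds le u v s \<psi>)"
| "pp_holds le u v s (PEx i \<phi>) = (\<exists>a. pp_holds le u v (s(i := a)) \<phi>)"

definition pp_definable ::
  "('a \<Rightarrow> 'a \<Rightarrow> bool) \<Rightarrow> 'a \<Rightarrow> 'a \<Rightarrow> nat \<Rightarrow> ('a list \<Rightarrow> bool) \<Rightarrow> bool" where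
  "pp_definable le u v k R \<longleftrightarrow>
     (\<exists>\<phi>. \<forall>s. pp_holds le u v s \<phi> \<longleftrightarrow> R (map s [0..<k]))"

end

(*
  Betw and incomparability do not see the direction of the order; the constants u < v break
  the symmetry. If Betw(z,u,v) then z < u, and if moreover x' is incomparable to u, then
  Betw(z,x',t) can only hold as z < x' < t. Chaining Betw(x',t,s), Betw(y,t,s) and
  Betw(x,y,t) through shared points transports this orientation to x < y. Once < is
  available, Low(x,y,z) is expressed by y \<bottom> z together with points p, q, p', q' around x that
  decide on which side of x the elements y and z lie.

  The converse implications need witnesses, and these come from the one-point extension
  property of the random partial order: every cut of a finite subset is realised by a new
  point. It follows from universality (the finite extension embeds somewhere) and
  homogeneity (the embedded copy can be moved back onto the given subset).
*)

theory Submission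
  imports Defs
begin

locale partial_order_rel =
  fixes le :: "'a \<Rightarrow> 'a \<Rightarrow> bool"
  assumes refl: "le x x"
    and antisym: "le x y \<Longrightarrow> le y x \<Longrightarrow> x = y"
    and trans: "le x y \<Longrightarrow> le y z \<Longrightarrow> le x z"

locale random_partial_order =
  fixes le :: "'a \<Rightarrow> 'a \<Rightarrow> bool"
  assumes random: "random_po le"

sublocale random_partial_order \<subseteq> partial_order_rel le
  using random unfolding random_po_def partial_order_on_type_def by unfold_locales blast+

context random_partial_order
begin

lemma finite_po_embeds:
  fixes R :: "'b \<Rightarrow> 'b \<Rightarrow> bool"
  assumes "finite X"
    and R_refl: "\<And>x. x \<in> X \<Longrightarrow> R x x"
    and R_antisym: "\<And>x y. x \<in> X \<Longrightarrow> y \<in> X \<Longrightarrow> R x y \<Longrightarrow> R y x \<Longrightarrow> x = y"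
    and R_trans: "\<And>x y z. x \<in> X \<Longrightarrow> y \<in> X \<Longrightarrow> z \<in> X \<Longrightarrow> R x y \<Longrightarrow> R y z \<Longrightarrow> R x z"
  obtains f where "inj_on f X" "\<And>x y. x \<in> X \<Longrightarrow> y \<in> X \<Longrightarrow> R x y \<longleftrightarrow> le (f x) (f y)"
proof -
  define n where "n = card X"
  obtain e where e: "bij_betw e {..<n} X"
    using ex_bij_betw_nat_finite[OF \<open>finite X\<close>] by (auto simp: n_def atLeast0LessThan)
  then have e_in: "i < n \<Longrightarrow> e i \<in> X" and e_inj: "i < n \<Longrightarrow> j < n \<Longrightarrow> e i = e j \<Longrightarrow> i = j" for i j
    by (auto simp: bij_betw_def inj_on_def)
  have embed: "all_finite_pos_embed le" using random by (simp add: random_po_def)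
  have "\<forall>i<n. R (e i) (e i)" by (simp add: e_in R_refl)
  moreover have "\<forall>i<n. \<forall>j<n. R (e i) (e j) \<and> R (e j) (e i) \<longrightarrow> i = j"
    by (metis e_in e_inj R_antisym)
  moreover have "\<forall>i<n. \<forall>j<n. \<forall>k<n. R (e i) (e j) \<and> R (e j) (e k) \<longrightarrow> R (e i) (e k)"
    by (metis e_in R_trans)
  ultimately obtain g :: "nat \<Rightarrow> 'a" where g: "inj_on g {..<n}"
      "\<And>i j. i < n \<Longrightarrow> j < n \<Longrightarrow> R (e i) (e j) \<longleftrightarrow> le (g i) (g j)"
    using embed[unfolded all_finite_pos_embed_def, rule_format, of n "\<lambda>i j. R (e i) (e j)"] by blast
  define e' where "e' = inv_into {..<n} e"
  have e'_bij: "bij_betw e' X {..<n}"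
    unfolding e'_def by (rule bij_betw_inv_into[OF e])
  have e': "e' x < n" "e (e' x) = x" if "x \<in> X" for x
    using bij_betw_apply[OF e'_bij] bij_betw_inv_into_right[OF e] that by (auto simp: e'_def)
  show thesis
  proof
    show "inj_on (g \<circ> e') X"
      using comp_inj_on[OF bij_betw_imp_inj_on[OF e'_bij]] g(1) bij_betw_imp_surj_on[OF e'_bij] by simp
    show "R x y \<longleftrightarrow> le ((g \<circ> e') x) ((g \<circ> e') y)" if "x \<in> X" "y \<in> X" for x y
      using g(2)[OF e'(1)[OF that(1)] e'(1)[OF that(2)]] e'(2)[OF that(1)] e'(2)[OF that(2)] by simp
  qed
qed

lemma one_point_extension:
  assumes "finite A" "L \<inter> H = {}"
    and down_closed: "\<And>a b. a \<in> A \<Longrightarrow> b \<in> L \<Longrightarrow> le a b \<Longrightarrow> a \<in> L"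
    and up_closed: "\<And>a b. a \<in> H \<Longrightarrow> b \<in> A \<Longrightarrow> le a b \<Longrightarrow> b \<in> H"
    and below: "\<And>a b. a \<in> L \<Longrightarrow> b \<in> H \<Longrightarrow> le a b"
  obtains p where "p \<notin> A" "\<And>a. a \<in> A \<Longrightarrow> le a p \<longleftrightarrow> a \<in> L"
    "\<And>a. a \<in> A \<Longrightarrow> le p a \<longleftrightarrow> a \<in> H"
proof -
  define X where "X = insert None (Some ` A)"
  define R where "R x y \<longleftrightarrow> (case (x, y) of
      (Some a, Some b) \<Rightarrow> le a b | (Some a, None) \<Rightarrow> a \<in> L
    | (None, Some b) \<Rightarrow> b \<in> H | (None, None) \<Rightarrow> True)" for x y
  have "finite X" using \<open>finite A\<close> by (simp add: X_def)
  moreover have "R x x" for x by (auto simp: R_def refl split: option.splits)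
  moreover have "x = y" if "R x y" "R y x" for x y
    using that \<open>L \<inter> H = {}\<close> antisym by (auto simp: R_def split: option.splits)
  moreover have "R x z" if "x \<in> X" "y \<in> X" "z \<in> X" "R x y" "R y z" for x y z
    using that by (cases x; cases y; cases z) (auto simp: R_def X_def intro: down_closed up_closed below trans)
  ultimately obtain f where f: "inj_on f X" "\<And>x y. x \<in> X \<Longrightarrow> y \<in> X \<Longrightarrow> R x y \<longleftrightarrow> le (f x) (f y)"
    using finite_po_embeds[of X R] by blast
  have f_Some: "le (f (Some a)) (f (Some b)) \<longleftrightarrow> le a b" if "a \<in> A" "b \<in> A" for a b
    using f(2)[of "Some a" "Some b"] that by (simp add: X_def R_def)
  have f_None: "le (f (Some a)) (f None) \<longleftrightarrow> a \<in> L" "le (f None) (f (Some a)) \<longleftrightarrow> a \<in> H"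
    if "a \<in> A" for a
    using f(2)[of "Some a" None] f(2)[of None "Some a"] that by (simp_all add: X_def R_def)
  define B where "B = f ` Some ` A"
  define g where "g b = the (inv_into X f b)" for b
  have g_f: "a \<in> A \<Longrightarrow> g (f (Some a)) = a" for a
    using f(1) by (simp add: g_def X_def)
  have g_inj: "inj_on g B"
    by (rule inj_onI) (auto simp: B_def g_f)
  have g_iso: "\<forall>x\<in>B. \<forall>y\<in>B. le x y \<longleftrightarrow> le (g x) (g y)"
    by (auto simp: B_def g_f f_Some)
  have "finite B" using \<open>finite A\<close> by (simp add: B_def)
  moreover have hom: "homogeneous_po le" using random by (simp add: random_po_def)
  ultimately obtain h where h: "\<And>x y. le x y \<longleftrightarrow> le (h x) (h y)" "\<And>x. x \<in> B \<Longrightarrow> h x = g x"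
    using hom[unfolded homogeneous_po_def, rule_format, of B g] g_inj g_iso by blast
  have h_f: "a \<in> A \<Longrightarrow> h (f (Some a)) = a" for a
    using h(2) g_f by (simp add: B_def)
  define p where "p = h (f None)"
  have p_below: "le a p \<longleftrightarrow> a \<in> L" and p_above: "le p a \<longleftrightarrow> a \<in> H" if "a \<in> A" for a
    using h(1)[of "f (Some a)" "f None"] h(1)[of "f None" "f (Some a)"] h_f[OF that] f_None[OF that]
    by (simp_all add: p_def)
  have "p \<notin> A"
    using p_below p_above refl \<open>L \<inter> H = {}\<close> by blast
  then show thesis using p_below p_above by (rule that)
qed

lemma point_above:
  assumes "finite A"
  obtains p where "p \<notin> A" "\<And>a. a \<in> A \<Longrightarrow> le a p \<longleftrightarrow> le a b" "\<And>a. a \<in> A \<Longrightarrow> \<not> le p a"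
  by (rule one_point_extension[OF assms, of "{a. le a b}" "{}"]) (auto intro: that trans)

lemma point_below:
  assumes "finite A"
  obtains p where "p \<notin> A" "\<And>a. a \<in> A \<Longrightarrow> \<not> le a p"
    "\<And>a. a \<in> A \<Longrightarrow> le p a \<longleftrightarrow> (\<exists>b\<in>B. le b a)"
  by (rule one_point_extension[OF assms, of "{}" "{a. \<exists>b\<in>B. le b a}"]) (auto intro: that trans)

lemma point_between:
  assumes "finite A" "lt le x y"
  obtains p where "p \<notin> A" "\<And>a. a \<in> A \<Longrightarrow> le a p \<longleftrightarrow> le a x"
    "\<And>a. a \<in> A \<Longrightarrow> le p a \<longleftrightarrow> le y a"
proof (rule one_point_extension[OF assms(1), of "{a. le a x}" "{a. le y a}"])
  show "{a. le a x} \<inter> {a. le y a} = {}"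
    using assms(2) antisym trans unfolding lt_def by blast
  show "le a b" if "a \<in> {a. le a x}" "b \<in> {a. le y a}" for a b
    using assms(2) that trans unfolding lt_def by blast
qed (auto intro: that trans)

end

definition lt_witnessed :: "('a \<Rightarrow> 'a \<Rightarrow> bool) \<Rightarrow> 'a \<Rightarrow> 'a \<Rightarrow> 'a \<Rightarrow> 'a \<Rightarrow> bool" where
  "lt_witnessed le u v x y \<longleftrightarrow> (\<exists>t s x' z. Betw le x y t \<and> Betw le y t s \<and> Betw le x' t s \<and>
     Betw le z u v \<and> Betw le z x' t \<and> incomp le x' u)"

definition low_witnessed :: "('a \<Rightarrow> 'a \<Rightarrow> bool) \<Rightarrow> 'a \<Rightarrow> 'a \<Rightarrow> 'a \<Rightarrow> bool" where
  "low_witnessed le x y z \<longleftrightarrow> incomp le y z \<and> (\<exists>p q p' q'. Betw le p x q \<and> Betw le p' x q \<and>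
     Betw le p x q' \<and> lt le p y \<and> lt le q z \<and> incomp le p' y \<and> incomp le q' z)"

lemma low_witnessed_commute: "low_witnessed le x y z \<longleftrightarrow> low_witnessed le x z y"
  unfolding low_witnessed_def Betw_def incomp_def by blast

context partial_order_rel
begin

lemma lt_if_lt_witnessed:
  assumes "lt le u v" "lt_witnessed le u v x y"
  shows "lt le x y"
proof -
  obtain t s x' z where w: "Betw le x y t" "Betw le y t s" "Betw le x' t s"
      "Betw le z u v" "Betw le z x' t" "incomp le x' u"
    using assms(2) unfolding lt_witnessed_def by blast
  have "lt le z u" using w(4) assms(1) antisym unfolding Betw_def lt_def by blast
  then have "lt le x' t" using w(5,6) trans unfolding Betw_def lt_def incomp_def by blast
  then have "lt le t s" using w(3) antisym unfolding Betw_def lt_def by blast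
  then have "lt le y t" using w(2) antisym unfolding Betw_def lt_def by blast
  then show ?thesis using w(1) antisym unfolding Betw_def lt_def by blast
qed

lemma Low_if_low_witnessed:
  assumes "low_witnessed le x y z"
  shows "Low le x y z"
proof -
  obtain p q p' q' where yz: "incomp le y z" and w: "Betw le p x q" "Betw le p' x q" "Betw le p x q'"
      "lt le p y" "lt le q z" "incomp le p' y" "incomp le q' z"
    using assms unfolding low_witnessed_def by blast
  show ?thesis
  proof (cases "lt le p x")
    case True
    then have "lt le x q" "lt le p' x" "lt le x q'"
      using w(1-3) antisym unfolding Betw_def lt_def by blast+
    then have "lt le x z" "incomp le y x"
      using yz w(5,6) antisym trans unfolding lt_def incomp_def by metis+
    then show ?thesis using yz unfolding Low_def incomp_def by blast
  next
    case False
    then have "lt le q x" "lt le x p" "lt le q' x" "lt le x p'"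
      using w(1-3) antisym unfolding Betw_def lt_def by blast+
    then have "lt le x y" "incomp le z x"
      using yz w(4,7) antisym trans unfolding lt_def incomp_def by metis+
    then show ?thesis using yz unfolding Low_def incomp_def by blast
  qed
qed

end

context random_partial_order
begin

lemma lt_witnessed_if_lt:
  assumes "lt le u v" "lt le x y"
  shows "lt_witnessed le u v x y"
proof -
  obtain t where t: "t \<notin> {x, y, u, v}" "\<And>a. a \<in> {x, y, u, v} \<Longrightarrow> le a t \<longleftrightarrow> le a y"
      "\<And>a. a \<in> {x, y, u, v} \<Longrightarrow> \<not> le t a"
    by (rule point_above[of "{x, y, u, v}"]) auto
  obtain s where s: "s \<noteq> t" "le t s"
    by (rule point_above[of "{t}" t]) (auto simp: refl)
  obtain x' where x': "x' \<notin> {t, u}" "\<And>a. a \<in> {t, u} \<Longrightarrow> \<not> le a x'"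
      "\<And>a. a \<in> {t, u} \<Longrightarrow> le x' a \<longleftrightarrow> le t a"
    by (rule point_below[of "{t, u}" "{t}"]) auto
  obtain z where z: "z \<notin> {u, x'}" "le z u" "le z x'"
    by (rule point_below[of "{u, x'}" "{u, x'}"]) (auto simp: refl)
  have "lt le x y" "lt le y t" "lt le t s" "lt le x' t" "lt le z u" "lt le z x'" "incomp le x' u"
    using assms(2) t s x' z refl unfolding lt_def incomp_def by auto
  then show ?thesis using assms(1) unfolding lt_witnessed_def Betw_def by blast
qed

lemma low_witnessed_if_lt:
  assumes "lt le x y" "incomp le z x" "incomp le z y"
  shows "low_witnessed le x y z"
proof -
  obtain p where p: "p \<notin> {x, y}" "le x p" "le p y"
    by (rule point_between[of "{x, y}" x y]) (use assms(1) refl in auto)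
  obtain q where q: "q \<notin> {x, z}" "le q x" "le q z"
    by (rule point_below[of "{x, z}" "{x, z}"]) (auto simp: refl)
  obtain p' where p': "p' \<notin> {x, y}" "\<And>a. a \<in> {x, y} \<Longrightarrow> le a p' \<longleftrightarrow> le a x"
      "\<And>a. a \<in> {x, y} \<Longrightarrow> \<not> le p' a"
    by (rule point_above[of "{x, y}" x]) auto
  obtain q' where q': "q' \<notin> {x, z}" "\<And>a. a \<in> {x, z} \<Longrightarrow> \<not> le a q'"
      "\<And>a. a \<in> {x, z} \<Longrightarrow> le q' a \<longleftrightarrow> le x a"
    by (rule point_below[of "{x, z}" "{x}"]) auto
  have "lt le x p" "lt le p y" "lt le q x" "lt le q z" "lt le x p'" "incomp le p' y"
      "lt le q' x" "incomp le q' z"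
    using assms p q p' q' refl antisym unfolding lt_def incomp_def by auto
  then show ?thesis using assms unfolding low_witnessed_def Betw_def incomp_def by blast
qed

lemma lt_iff_lt_witnessed:
  assumes "lt le u v"
  shows "lt le x y \<longleftrightarrow> lt_witnessed le u v x y"
  using lt_witnessed_if_lt lt_if_lt_witnessed assms by blast

lemma Low_iff_low_witnessed: "Low le x y z \<longleftrightarrow> low_witnessed le x y z"
proof
  assume "Low le x y z"
  then show "low_witnessed le x y z"
    using low_witnessed_if_lt low_witnessed_commute unfolding Low_def by metis
qed (rule Low_if_low_witnessed)

end

text \<open>The witnesses t, s, x', z, u, v of \<open>lt_witnessed\<close> occupy variables \<open>k, \<dots>, k + 5\<close>,
  so \<open>k\<close> must exceed the free variables \<open>a\<close> and \<open>b\<close>.\<close>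

definition lt_formula :: "nat \<Rightarrow> nat \<Rightarrow> nat \<Rightarrow> ppf" where
  "lt_formula a b k = PEx k (PEx (k + 1) (PEx (k + 2) (PEx (k + 3) (PEx (k + 4) (PEx (k + 5)
     (PAnd (PBetw a b k) (PAnd (PBetw b k (k + 1)) (PAnd (PBetw (k + 2) k (k + 1))
     (PAnd (PBetw (k + 3) (k + 4) (k + 5)) (PAnd (PU (k + 4)) (PAnd (PV (k + 5))
     (PAnd (PBetw (k + 3) (k + 2) k) (PPerp (k + 2) (k + 4))))))))))))))"

lemma pp_holds_lt_formula:
  assumes "a < k" "b < k"
  shows "pp_holds le u v s (lt_formula a b k) \<longleftrightarrow> lt_witnessed le u v (s a) (s b)"
  using assms unfolding lt_formula_def lt_witnessed_def by (simp add: fun_upd_def)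

text \<open>Variables 3--6 hold p, q, p', q' of \<open>low_witnessed\<close>; the two copies of
  \<open>lt_formula\<close> reuse variables from 7 on.\<close>

definition low_formula :: ppf where
  "low_formula = PAnd (PPerp 1 2) (PEx 3 (PEx 4 (PEx 5 (PEx 6
     (PAnd (PBetw 3 0 4) (PAnd (PBetw 5 0 4) (PAnd (PBetw 3 0 6)
     (PAnd (lt_formula 3 1 7) (PAnd (lt_formula 4 2 7) (PAnd (PPerp 5 1) (PPerp 6 2)))))))))))"

lemma (in random_partial_order) pp_holds_low_formula:
  assumes "lt le u v"
  shows "pp_holds le u v s low_formula \<longleftrightarrow> low_witnessed le (s 0) (s 1) (s 2)"
  unfolding low_formula_def low_witnessed_def
  by (simp add: pp_holds_lt_formula lt_iff_lt_witnessed[OF assms, symmetric])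

theorem lemma60:
  fixes le :: "'a \<Rightarrow> 'a \<Rightarrow> bool" and u v :: 'a
  assumes "random_po le"
    and "lt le u v"
  shows "pp_definable le u v 2 (\<lambda>xs. lt le (xs ! 0) (xs ! 1)) \<and>
         pp_definable le u v 3 (\<lambda>xs. Low le (xs ! 0) (xs ! 1) (xs ! 2))"
proof -
  interpret random_partial_order le by (rule random_partial_order.intro) fact
  have "pp_holds le u v s (lt_formula 0 1 2) \<longleftrightarrow> lt le (s 0) (s 1)" for s
    by (simp add: pp_holds_lt_formula lt_iff_lt_witnessed[OF assms(2)])
  moreover have "pp_holds le u v s low_formula \<longleftrightarrow> Low le (s 0) (s 1) (s 2)" for s
    by (simp add: pp_holds_low_formula[OF assms(2)] Low_iff_low_witnessed)
  ultimately show ?thesis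
    unfolding pp_definable_def by (auto simp: upt_rec numeral_2_eq_2 numeral_3_eq_3)
qed

end
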